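(* Let $p\ge 0.5$ and assume that for every $x\in\mathcal X$ the minimum below is attained. The optimal cost CF algorithm $$A_{\mathrm{OC}}(x)=\operatorname*{argmin}_{x'\in\mathcal X:\ m(x')\ge p} c(x,x'),$$ where ties among minimizers are broken by a fixed deterministic rule (a fixed total order on $\mathcal X$, independent of $x$), is IPF stable globally.
   Context: Input space $\mathcal X=\mathcal X_1\times\cdots\times\mathcal X_D$, where each feature $d$ is either categorical ($\mathcal X_d$ a finite set) or numerical ($\mathcal X_d\subseteq\mathbb R$). A model is a function $m:\mathcal X\to[0,1]$. Cost: $c(x,x')=\sum_{d=1}^D c_d(x_d,x'_d)$ with $c_d(x_d,x'_d)=\mathbb 1\{x_d\neq x'_d\}$ for categorical $d$ and $c_d(x_d,x'_d)=|F_d(x_d)-F_d(x'_d)|$ for numerical $d$, where $F_d$ is a fixed cumulative distribution function (nondecreasing) of feature $d$. A CF algorithm $A$ maps each $x\in\mathcal X$ to a probability distribution over $\mathcal X$; $A$ is deterministic at $x$ if this distribution is a point mass, written $A(x)$. $\Phi(x,x')$ denotes the set of all $w\in\mathcal X$ such that for each numerical $d$, $w_d$ lies in the closed interval between $x_d$ and $x'_d$, and for each categorical $d$, $w_d\in\{x_d,x'_d\}$. IPF stable: $A$ is IPF stable at $x$ if (1) $A$ is deterministic at $x$, and (2) for all $w\in\Phi(x,A(x))$, $A$ is deterministic at $w$ and $A(w)=A(x)$. $A$ is IPF stable globally if it is IPF stable at every $x\in\mathcal X$. *)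

theory Defs
  imports "HOL-Probability.Probability"
begin

type_synonym point = "nat \<Rightarrow> real"

text \<open>Categorical features
  (cat d) have a finite value set; their values are encoded as reals, which is
  harmless since only equality of categorical values is ever used.\<close>

definition inspace :: "nat \<Rightarrow> (nat \<Rightarrow> real set) \<Rightarrow> point set" where
  "inspace D Xs = PiE {..<D} Xs"

definition cost :: "nat \<Rightarrow> (nat \<Rightarrow> bool) \<Rightarrow> (nat \<Rightarrow> real \<Rightarrow> real) \<Rightarrow> point \<Rightarrow> point \<Rightarrow> real" where
  "cost D cat F x x' =
     (\<Sum>d<D. if cat d then (if x d \<noteq> x' d then 1 else 0)
             else \<bar>F d (x d) - F d (x' d)\<bar>)"

definition Phi :: "nat \<Rightarrow> (nat \<Rightarrow> bool) \<Rightarrow> (nat \<Rightarrow> real set) \<Rightarrow> point \<Rightarrow> point \<Rightarrow> point set" where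
  "Phi D cat Xs x x' = {w \<in> inspace D Xs. \<forall>d<D.
      (cat d \<longrightarrow> w d \<in> {x d, x' d}) \<and>
      (\<not> cat d \<longrightarrow> min (x d) (x' d) \<le> w d \<and> w d \<le> max (x d) (x' d))}"

definition deterministic_at :: "(point \<Rightarrow> point pmf) \<Rightarrow> point \<Rightarrow> bool" where
  "deterministic_at A x \<longleftrightarrow> (\<exists>y. A x = return_pmf y)"

definition IPF_stable_at ::
  "nat \<Rightarrow> (nat \<Rightarrow> bool) \<Rightarrow> (nat \<Rightarrow> real set) \<Rightarrow> (point \<Rightarrow> point pmf) \<Rightarrow> point \<Rightarrow> bool" where
  "IPF_stable_at D cat Xs A x \<longleftrightarrow>
     deterministic_at A x \<and>
     (\<forall>w \<in> Phi D cat Xs x (THE y. A x = return_pmf y).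
        deterministic_at A w \<and> A w = A x)"

definition IPF_stable_globally ::
  "nat \<Rightarrow> (nat \<Rightarrow> bool) \<Rightarrow> (nat \<Rightarrow> real set) \<Rightarrow> (point \<Rightarrow> point pmf) \<Rightarrow> bool" where
  "IPF_stable_globally D cat Xs A \<longleftrightarrow> (\<forall>x \<in> inspace D Xs. IPF_stable_at D cat Xs A x)"

definition minimizers ::
  "nat \<Rightarrow> (nat \<Rightarrow> bool) \<Rightarrow> (nat \<Rightarrow> real set) \<Rightarrow> (nat \<Rightarrow> real \<Rightarrow> real) \<Rightarrow> (point \<Rightarrow> real) \<Rightarrow> real
   \<Rightarrow> point \<Rightarrow> point set" where
  "minimizers D cat Xs F m p x =
     {y \<in> inspace D Xs. m y \<ge> p \<and>
        (\<forall>z \<in> inspace D Xs. m z \<ge> p \<longrightarrow> cost D cat F x y \<le> cost D cat F x z)}"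

definition A_OC ::
  "nat \<Rightarrow> (nat \<Rightarrow> bool) \<Rightarrow> (nat \<Rightarrow> real set) \<Rightarrow> (nat \<Rightarrow> real \<Rightarrow> real) \<Rightarrow> (point \<Rightarrow> real) \<Rightarrow> real
   \<Rightarrow> (point \<Rightarrow> point \<Rightarrow> bool) \<Rightarrow> point \<Rightarrow> point pmf" where
  "A_OC D cat Xs F m p le x =
     return_pmf (THE y. y \<in> minimizers D cat Xs F m p x \<and>
                        (\<forall>z \<in> minimizers D cat Xs F m p x. le y z))"

definition total_order_on :: "point set \<Rightarrow> (point \<Rightarrow> point \<Rightarrow> bool) \<Rightarrow> bool" where
  "total_order_on S le \<longleftrightarrow>
     (\<forall>x\<in>S. le x x) \<and>
     (\<forall>x\<in>S. \<forall>y\<in>S. le x y \<and> le y x \<longrightarrow> x = y) \<and>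
     (\<forall>x\<in>S. \<forall>y\<in>S. \<forall>z\<in>S. le x y \<and> le y z \<longrightarrow> le x z) \<and>
     (\<forall>x\<in>S. \<forall>y\<in>S. le x y \<or> le y x)"

end

theory Submission
  imports Defs
begin

text \<open>The cost is a sum of per-feature pseudometrics, so it satisfies the triangle inequality,
  and for every \<open>w\<close> in the box \<open>Phi x y\<close> the monotonicity of the \<open>F d\<close> makes it additive along
  \<open>x \<rightarrow> w \<rightarrow> y\<close>. Hence an optimal counterfactual \<open>y\<close> of \<open>x\<close> is still optimal from \<open>w\<close>, and every
  optimal counterfactual of \<open>w\<close> is one of \<open>x\<close>. Since the tie-breaking order does not depend on
  the query point, the least minimizer of \<open>w\<close> is again \<open>y\<close>.\<close>

lemma cost_triangle: "cost D cat F x z \<le> cost D cat F x w + cost D cat F w z"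
  unfolding cost_def sum.distrib[symmetric]
  by (rule sum_mono) auto

lemma cost_Phi_additive:
  assumes mono: "\<And>d. d < D \<Longrightarrow> \<not> cat d \<Longrightarrow> mono (F d)"
    and w: "w \<in> Phi D cat Xs x y"
  shows "cost D cat F x y = cost D cat F x w + cost D cat F w y"
  unfolding cost_def sum.distrib[symmetric]
proof (rule sum.cong[OF refl])
  fix d assume "d \<in> {..<D}"
  hence d: "d < D" by simp
  show "(if cat d then if x d \<noteq> y d then 1 else 0 else \<bar>F d (x d) - F d (y d)\<bar>) =
    (if cat d then if x d \<noteq> w d then 1 else 0 else \<bar>F d (x d) - F d (w d)\<bar>) +
    (if cat d then if w d \<noteq> y d then 1 else 0 else \<bar>F d (w d) - F d (y d)\<bar>)"
  proof (cases "cat d")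
    case True
    with w d have "w d \<in> {x d, y d}" unfolding Phi_def by auto
    with True show ?thesis by auto
  next
    case False
    with w d have between: "min (x d) (y d) \<le> w d" "w d \<le> max (x d) (y d)"
      unfolding Phi_def by auto
    have F: "mono (F d)" using mono d False by auto
    show ?thesis
    proof (cases "x d \<le> y d")
      case True
      with between F have "F d (x d) \<le> F d (w d)" "F d (w d) \<le> F d (y d)"
        by (auto dest: monoD)
      with \<open>\<not> cat d\<close> show ?thesis by auto
    next
      case False
      with between F have "F d (y d) \<le> F d (w d)" "F d (w d) \<le> F d (x d)"
        by (auto dest: monoD)
      with \<open>\<not> cat d\<close> show ?thesis by auto
    qed
  qed
qed

lemma minimizers_subset_inspace: "minimizers D cat Xs F m p x \<subseteq> inspace D Xs"
  unfolding minimizers_def by auto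

lemma minimizers_via_additive_point:
  assumes y: "y \<in> minimizers D cat Xs F m p x"
    and additive: "cost D cat F x y = cost D cat F x w + cost D cat F w y"
  shows "y \<in> minimizers D cat Xs F m p w"
    and "minimizers D cat Xs F m p w \<subseteq> minimizers D cat Xs F m p x"
proof -
  have y_valid: "y \<in> inspace D Xs" "m y \<ge> p"
    and y_opt: "\<And>z. z \<in> inspace D Xs \<Longrightarrow> m z \<ge> p \<Longrightarrow> cost D cat F x y \<le> cost D cat F x z"
    using y unfolding minimizers_def by auto
  show y_w: "y \<in> minimizers D cat Xs F m p w"
    unfolding minimizers_def
  proof (intro CollectI conjI ballI impI y_valid)
    fix z assume "z \<in> inspace D Xs" "m z \<ge> p"
    then have "cost D cat F x y \<le> cost D cat F x z" by (rule y_opt)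
    then show "cost D cat F w y \<le> cost D cat F w z"
      using additive cost_triangle[of D cat F x z w] by linarith
  qed
  show "minimizers D cat Xs F m p w \<subseteq> minimizers D cat Xs F m p x"
  proof
    fix z assume z: "z \<in> minimizers D cat Xs F m p w"
    then have "cost D cat F w z \<le> cost D cat F w y"
      using y_valid unfolding minimizers_def by auto
    then have "cost D cat F x z \<le> cost D cat F x y"
      using additive cost_triangle[of D cat F x z w] by linarith
    then show "z \<in> minimizers D cat Xs F m p x"
      using z y_opt unfolding minimizers_def by force
  qed
qed

lemma A_OC_eq_least_minimizer:
  assumes antisym: "antisymp_on (inspace D Xs) le"
    and y: "y \<in> minimizers D cat Xs F m p x"
    and least: "\<forall>z \<in> minimizers D cat Xs F m p x. le y z"
  shows "A_OC D cat Xs F m p le x = return_pmf y"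
proof -
  have "(THE y. y \<in> minimizers D cat Xs F m p x \<and> (\<forall>z \<in> minimizers D cat Xs F m p x. le y z)) = y"
  proof (rule the_equality)
    fix y' assume "y' \<in> minimizers D cat Xs F m p x \<and> (\<forall>z \<in> minimizers D cat Xs F m p x. le y' z)"
    then show "y' = y"
      using y least antisym minimizers_subset_inspace unfolding antisymp_on_def by blast
  qed (use y least in auto)
  then show ?thesis unfolding A_OC_def by simp
qed

theorem theorem2:
  fixes D :: nat and cat :: "nat \<Rightarrow> bool" and Xs :: "nat \<Rightarrow> real set"
    and F :: "nat \<Rightarrow> real \<Rightarrow> real" and m :: "point \<Rightarrow> real" and p :: real
    and le :: "point \<Rightarrow> point \<Rightarrow> bool"
  assumes cat_finite: "\<And>d. d < D \<Longrightarrow> cat d \<Longrightarrow> finite (Xs d)"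
    and F_mono: "\<And>d. d < D \<Longrightarrow> \<not> cat d \<Longrightarrow> mono (F d)"
    and F_bot: "\<And>d. d < D \<Longrightarrow> \<not> cat d \<Longrightarrow> (F d \<longlongrightarrow> 0) at_bot"
    and F_top: "\<And>d. d < D \<Longrightarrow> \<not> cat d \<Longrightarrow> (F d \<longlongrightarrow> 1) at_top"
    and F_rcont: "\<And>d t. d < D \<Longrightarrow> \<not> cat d \<Longrightarrow> continuous (at_right t) (F d)"
    and m_range: "\<And>x. x \<in> inspace D Xs \<Longrightarrow> 0 \<le> m x \<and> m x \<le> 1"
    and p_ge: "p \<ge> 0.5"
    and min_attained: "\<And>x. x \<in> inspace D Xs \<Longrightarrow> minimizers D cat Xs F m p x \<noteq> {}"
    and le_total: "total_order_on (inspace D Xs) le"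
    and tie_break: "\<And>x. x \<in> inspace D Xs \<Longrightarrow>
        \<exists>y \<in> minimizers D cat Xs F m p x. \<forall>z \<in> minimizers D cat Xs F m p x. le y z"
  shows "IPF_stable_globally D cat Xs (A_OC D cat Xs F m p le)"
  unfolding IPF_stable_globally_def
proof
  let ?M = "minimizers D cat Xs F m p" and ?A = "A_OC D cat Xs F m p le"
  have antisym: "antisymp_on (inspace D Xs) le"
    using le_total unfolding total_order_on_def antisymp_on_def by blast
  fix x assume "x \<in> inspace D Xs"
  then obtain y where y: "y \<in> ?M x" and least: "\<forall>z \<in> ?M x. le y z"
    using tie_break by blast
  have Ax: "?A x = return_pmf y"
    using A_OC_eq_least_minimizer[OF antisym y least] .
  have "?A w = return_pmf y" if "w \<in> Phi D cat Xs x y" for w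
  proof -
    note additive = cost_Phi_additive[OF F_mono that]
    show ?thesis
      using A_OC_eq_least_minimizer[OF antisym minimizers_via_additive_point(1)[OF y additive]]
        least minimizers_via_additive_point(2)[OF y additive] by blast
  qed
  then show "IPF_stable_at D cat Xs ?A x"
    unfolding IPF_stable_at_def deterministic_at_def Ax by auto
qed

end
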